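(* Let $s\ge2$ groups of positive integer moduli be given: Group $j$ ($1\le j\le s$) consists of $L_j\ge1$ moduli $0<M_{j,1}<\dots<M_{j,L_j}$; put $\delta_j=\operatorname{lcm}(M_{j,1},\dots,M_{j,L_j})$ and assume $\delta_1,\dots,\delta_s$ pairwise distinct. Let $N$ be an integer with $0\le N<\operatorname{lcm}(\delta_1,\dots,\delta_s)$, let $r_{j,i}$ be the remainder of $N$ modulo $M_{j,i}$ and $n_{j,i}=(N-r_{j,i})/M_{j,i}$. Let $G_j=\max_{1\le i\le L_j}\min_{q\ne i}\gcd(M_{j,i},M_{j,q})/4$ if $L_j\ge2$, $G_j=M_{j,1}/4$ if $L_j=1$, and let $k$ be an index with $$G:=\min_{q\ne k}\frac{\gcd(\delta_k,\delta_q)}{4}=\max_{1\le i\le s}\min_{q\ne i}\frac{\gcd(\delta_i,\delta_q)}{4}.$$ Let $\tilde r_{j,i}$ be integers with $0\le\tilde r_{j,i}\le M_{j,i}-1$ and $|\tilde r_{j,i}-r_{j,i}|\le\tau_j$, where $$\tau_k<\min(G_k,G),\qquad \tau_j<\min\Big(G_j,\ \frac{\gcd(\delta_j,\delta_k)}{2}-\min(G_k,G)\Big)\ \ (j\ne k).$$ Then the two-stage algorithm (described in the context) with stage-2 reference index $k$ outputs $\hat n_{j,i}=n_{j,i}$ for all $1\le i\le L_j$, $1\le j\le s$.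
   Context: For $x\in\mathbb R$, $[x]$ denotes the unique integer with $-1/2\le x-[x]<1/2$. Single-stage algorithm $\mathcal A$: for pairwise distinct positive integers $P_1,\dots,P_m$ ($m\ge2$), a reference index $k$ and integers $x_1,\dots,x_m$: for $i\ne k$ put $m_{ki}=\gcd(P_k,P_i)$, $\Gamma_{ki}=P_k/m_{ki}$, $\Gamma_{ik}=P_i/m_{ki}$, $\hat q_{ik}=[(x_i-x_k)/m_{ki}]$, let $\bar\Gamma_{ki}$ be an inverse of $\Gamma_{ki}$ modulo $\Gamma_{ik}$ and $\hat\xi_{ik}\equiv\hat q_{ik}\bar\Gamma_{ki}\pmod{\Gamma_{ik}}$, $0\le\hat\xi_{ik}<\Gamma_{ik}$; let $\hat n_k$ be the least nonnegative $y$ with $y\equiv\hat\xi_{ik}\pmod{\Gamma_{ik}}$ for all $i\ne k$ (the algorithm fails if none exists), and $\hat n_i=(\hat n_k\Gamma_{ki}-\hat q_{ik})/\Gamma_{ik}$ for $i\ne k$. Two-stage algorithm with stage-2 reference index $k$: Stage 1: for each group $j$, if $L_j\ge2$ apply $\mathcal A$ to $M_{j,1},\dots,M_{j,L_j}$ with inputs $\tilde r_{j,1},\dots,\tilde r_{j,L_j}$ and a reference index attaining $\max_i\min_{q\ne i}\gcd(M_{j,i},M_{j,q})$, obtaining $\hat K_{j,1},\dots,\hat K_{j,L_j}$; if $L_j=1$ set $\hat K_{j,1}=0$. Put $\hat N_j=[\frac1{L_j}\sum_{i=1}^{L_j}(\hat K_{j,i}M_{j,i}+\tilde r_{j,i})]$.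 Stage 2: apply $\mathcal A$ to $\delta_1,\dots,\delta_s$ with inputs $\hat N_1,\dots,\hat N_s$ and reference index $k$, obtaining $\hat l_1,\dots,\hat l_s$. Output $\hat n_{j,i}=\hat l_j\delta_j/M_{j,i}+\hat K_{j,i}$. *)

theory Defs
  imports "HOL-Number_Theory.Number_Theory"
begin

definition rnd :: "real \<Rightarrow> int" where
  "rnd x = \<lfloor>x + 1/2\<rfloor>"

text \<open>Single-stage algorithm A. Indices are 0-based: moduli P 0, ..., P (m-1),
  inputs x 0, ..., x (m-1), reference index k. Returns None on failure
  (no solution of the congruence system).\<close>
definition algA :: "(nat \<Rightarrow> int) \<Rightarrow> (nat \<Rightarrow> int) \<Rightarrow> nat \<Rightarrow> nat \<Rightarrow> (nat \<Rightarrow> int) option" where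
  "algA P x m k =
    (let mk = (\<lambda>i. gcd (P k) (P i));
         Gki = (\<lambda>i. P k div mk i);
         Gik = (\<lambda>i. P i div mk i);
         q = (\<lambda>i. rnd (real_of_int (x i - x k) / real_of_int (mk i)));
         ginv = (\<lambda>i. SOME g. [Gki i * g = 1] (mod Gik i));
         xi = (\<lambda>i. (q i * ginv i) mod Gik i);
         ok = (\<lambda>y::nat. \<forall>i<m. i \<noteq> k \<longrightarrow> [int y = xi i] (mod Gik i))
     in if \<exists>y. ok y then
          (let nk = int (LEAST y. ok y)
           in Some (\<lambda>i. if i = k then nk else (nk * Gki i - q i) div Gik i))
        else None)"

definition delta :: "(nat \<Rightarrow> nat \<Rightarrow> int) \<Rightarrow> (nat \<Rightarrow> nat) \<Rightarrow> nat \<Rightarrow> int" where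
  "delta M L j = Lcm (M j ` {..<L j})"

text \<open>Two-stage algorithm. Groups j < s, group j has moduli M j 0 < ... < M j (L j - 1),
  inputs rt j i; ref j is the stage-1 reference index of group j; k is the stage-2 reference.\<close>
definition twostage :: "nat \<Rightarrow> (nat \<Rightarrow> nat) \<Rightarrow> (nat \<Rightarrow> nat \<Rightarrow> int) \<Rightarrow> (nat \<Rightarrow> nat \<Rightarrow> int)
      \<Rightarrow> (nat \<Rightarrow> nat) \<Rightarrow> nat \<Rightarrow> (nat \<Rightarrow> nat \<Rightarrow> int) option" where
  "twostage s L M rt ref k =
    (let stage1 = (\<lambda>j. if 2 \<le> L j then algA (M j) (rt j) (L j) (ref j) else Some (\<lambda>i. 0))
     in if \<forall>j<s. stage1 j \<noteq> None then
          (let K = (\<lambda>j. the (stage1 j));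
               Nh = (\<lambda>j. rnd ((\<Sum>i<L j. real_of_int (K j i * M j i + rt j i)) / real (L j)))
           in (case algA (delta M L) Nh s k of
                 None \<Rightarrow> None
               | Some l \<Rightarrow> Some (\<lambda>j i. l j * (delta M L j div M j i) + K j i)))
        else None)"

definition mingcd :: "(nat \<Rightarrow> int) \<Rightarrow> nat \<Rightarrow> nat \<Rightarrow> int" where
  "mingcd P m i = (MIN q\<in>{..<m} - {i}. gcd (P i) (P q))"

definition maxmingcd :: "(nat \<Rightarrow> int) \<Rightarrow> nat \<Rightarrow> int" where
  "maxmingcd P m = (MAX i\<in>{..<m}. mingcd P m i)"

definition Gj :: "(nat \<Rightarrow> nat) \<Rightarrow> (nat \<Rightarrow> nat \<Rightarrow> int) \<Rightarrow> nat \<Rightarrow> real" where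
  "Gj L M j = (if 2 \<le> L j then real_of_int (maxmingcd (M j) (L j)) / 4
               else real_of_int (M j 0) / 4)"

end

theory Submission
  imports Defs
begin

text \<open>
  The single-stage algorithm is exact as soon as the residue errors \<open>e\<^sub>i\<close> satisfy
  \<open>2 \<bar>e\<^sub>i - e\<^sub>k\<bar> < gcd P\<^sub>k P\<^sub>i\<close>: rounding \<open>(x\<^sub>i - x\<^sub>k) / gcd P\<^sub>k P\<^sub>i\<close> then returns
  \<open>n\<^sub>k \<Gamma>\<^sub>k\<^sub>i - n\<^sub>i \<Gamma>\<^sub>i\<^sub>k\<close> exactly, so the congruences pin \<open>n\<^sub>k\<close> down modulo
  \<open>lcm / P\<^sub>k\<close>, and \<open>n\<^sub>k < lcm / P\<^sub>k\<close> makes it the least solution.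
  In stage 1 all errors of group \<open>j\<close> are at most \<open>\<tau>\<^sub>j < G\<^sub>j\<close>, a quarter of the relevant gcd,
  so every group recovers \<open>N mod \<delta>\<^sub>j\<close>; averaging its \<open>L\<^sub>j\<close> reconstructions and rounding
  keeps the error within \<open>\<tau>\<^sub>j\<close>, and the bounds on \<open>\<tau>\<close> give \<open>\<tau>\<^sub>j + \<tau>\<^sub>k < gcd \<delta>\<^sub>j \<delta>\<^sub>k / 2\<close>,
  which is the exactness condition for stage 2 on the moduli \<open>\<delta>\<^sub>j\<close>. Finally
  \<open>(N div \<delta>\<^sub>j) (\<delta>\<^sub>j / M\<^sub>j\<^sub>,\<^sub>i) + (N mod \<delta>\<^sub>j) div M\<^sub>j\<^sub>,\<^sub>i = N div M\<^sub>j\<^sub>,\<^sub>i\<close>.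
\<close>

lemma rnd_of_int_add: "rnd (real_of_int c + t) = c + rnd t"
  unfolding rnd_def by (metis add.assoc add.commute floor_add_int)

lemma rnd_of_int [simp]: "rnd (real_of_int c) = c"
  unfolding rnd_def by linarith

lemma rnd_mono: "t \<le> u \<Longrightarrow> rnd t \<le> rnd u"
  unfolding rnd_def by (intro floor_mono) simp

lemma rnd_eq_0: "\<bar>t\<bar> < 1/2 \<Longrightarrow> rnd t = 0"
  unfolding rnd_def by (simp add: floor_eq_iff; arith)

lemma rnd_div_near_multiple:
  fixes m a d :: int
  assumes "0 < m" "2 * \<bar>d\<bar> < m"
  shows "rnd (real_of_int (m * a + d) / real_of_int m) = a"
proof -
  have "real_of_int (m * a + d) / real_of_int m = real_of_int a + real_of_int d / real_of_int m"
    using assms(1) by (simp add: field_simps)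
  moreover have "\<bar>real_of_int d / real_of_int m\<bar> < 1/2"
    using assms by (simp add: abs_div_pos field_simps flip: of_int_abs)
  ultimately show ?thesis by (simp add: rnd_of_int_add rnd_eq_0)
qed

lemma abs_rnd_le:
  assumes "\<bar>t\<bar> \<le> real_of_int F"
  shows "\<bar>rnd t\<bar> \<le> F"
proof -
  have "rnd (real_of_int (- F)) \<le> rnd t" "rnd t \<le> rnd (real_of_int F)"
    using assms by (intro rnd_mono; simp add: abs_le_iff)+
  then show ?thesis using rnd_of_int[of "- F"] by (auto simp: abs_le_iff)
qed

lemma abs_rnd_mean_le:
  fixes e :: "nat \<Rightarrow> int" and tau :: real
  assumes "0 < m" and "\<forall>i<m. real_of_int \<bar>e i\<bar> \<le> tau"
  shows "real_of_int \<bar>rnd ((\<Sum>i<m. real_of_int (e i)) / real m)\<bar> \<le> tau"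
proof -
  define F where "F = \<lfloor>tau\<rfloor>"
  have "\<bar>\<Sum>i<m. real_of_int (e i)\<bar> \<le> (\<Sum>i<m. real_of_int F)"
    using assms(2) unfolding F_def
    by (intro order_trans[OF sum_abs] sum_mono) (simp add: le_floor_iff flip: of_int_abs)
  then have "\<bar>(\<Sum>i<m. real_of_int (e i)) / real m\<bar> \<le> real_of_int F"
    using assms(1) by (simp add: field_simps)
  then have "\<bar>rnd ((\<Sum>i<m. real_of_int (e i)) / real m)\<bar> \<le> F"
    by (rule abs_rnd_le)
  then show ?thesis unfolding F_def by (meson of_int_floor_le of_int_le_iff order_trans)
qed

lemma twice_abs_diff_less:
  fixes a b g :: int and s t :: real
  assumes "real_of_int \<bar>a\<bar> \<le> s" "real_of_int \<bar>b\<bar> \<le> t" "s + t < real_of_int g / 2"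
  shows "2 * \<bar>a - b\<bar> < g"
proof -
  have "real_of_int \<bar>a - b\<bar> \<le> real_of_int \<bar>a\<bar> + real_of_int \<bar>b\<bar>"
    by (simp flip: of_int_add of_int_abs; linarith)
  then have "real_of_int (2 * \<bar>a - b\<bar>) < real_of_int g" using assms by simp
  then show ?thesis by (simp only: of_int_less_iff)
qed

lemma div_mult_div_add_mod_div:
  fixes a b d :: int
  assumes "b dvd d"
  shows "a div d * (d div b) + a mod d div b = a div b"
proof (cases "b = 0")
  case False
  obtain c where d: "d = b * c" using assms by blast
  have "a div b = (a mod d + b * (c * (a div d))) div b"
    using d mod_div_mult_eq[of a d] by (simp add: algebra_simps)
  also have "\<dots> = a mod d div b + c * (a div d)" using False by simp
  finally show ?thesis using d False by simp
qed simp

lemma div_gcd_dvd_iff_dvd_mult: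
  fixes a b z :: int
  assumes "a \<noteq> 0"
  shows "b div gcd a b dvd z \<longleftrightarrow> b dvd a * z"
proof -
  define g where "g = gcd a b"
  have g: "g \<noteq> 0" using assms unfolding g_def by simp
  have a: "a = g * (a div g)" and b: "b = g * (b div g)" unfolding g_def by simp_all
  have cop: "coprime (a div g) (b div g)" unfolding g_def using assms by (intro div_gcd_coprime) auto
  have "b div g dvd z \<longleftrightarrow> b div g dvd a div g * z"
    using cop by (metis coprime_commute coprime_dvd_mult_right_iff)
  also have "\<dots> \<longleftrightarrow> g * (b div g) dvd g * (a div g * z)" using g by simp
  also have "\<dots> \<longleftrightarrow> b dvd a * z" using a b by (metis mult.assoc)
  finally show ?thesis unfolding g_def .
qed

lemma Least_dvd_mult_diff_eq:
  fixes c D n :: int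
  assumes "0 < c" "0 \<le> n" "c * n < D"
  shows "int (LEAST y. D dvd c * (int y - n)) = n"
proof -
  define y where "y = (LEAST y. D dvd c * (int y - n))"
  have sol: "D dvd c * (int (nat n) - n)" using assms(2) by simp
  then have "D dvd c * (int y - n)" unfolding y_def by (rule LeastI)
  then have dvd: "D dvd c * (n - int y)" by (metis dvd_minus_iff minus_diff_eq mult_minus_right)
  have "y \<le> nat n" unfolding y_def using sol by (rule Least_le)
  have "int y = n"
  proof (rule ccontr)
    assume "int y \<noteq> n"
    then have pos: "0 < c * (n - int y)" using \<open>y \<le> nat n\<close> assms(1,2) by simp
    have "c * (n - int y) \<le> c * n" using assms(1) by (intro mult_left_mono) auto
    with assms(3) zdvd_imp_le[OF dvd pos] show False by simp
  qed
  then show ?thesis unfolding y_def .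
qed

lemma algA_correct:
  fixes P x e :: "nat \<Rightarrow> int" and X :: int
  assumes km: "k < m" and Ppos: "\<forall>i<m. 0 < P i"
    and X: "0 \<le> X" "X < Lcm (P ` {..<m})"
    and x: "\<forall>i<m. x i = X mod P i + e i"
    and err: "\<forall>i<m. i \<noteq> k \<longrightarrow> 2 * \<bar>e i - e k\<bar> < gcd (P k) (P i)"
  shows "\<exists>f. algA P x m k = Some f \<and> (\<forall>i<m. f i = X div P i)"
proof -
  define mk where "mk = (\<lambda>i. gcd (P k) (P i))"
  define Gki where "Gki = (\<lambda>i. P k div mk i)"
  define Gik where "Gik = (\<lambda>i. P i div mk i)"
  define q where "q = (\<lambda>i. rnd (real_of_int (x i - x k) / real_of_int (mk i)))"
  define ginv where "ginv = (\<lambda>i. SOME u. [Gki i * u = 1] (mod Gik i))"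
  define ok where "ok = (\<lambda>y::nat. \<forall>i<m. i \<noteq> k \<longrightarrow> [int y = (q i * ginv i) mod Gik i] (mod Gik i))"
  define n where "n = (\<lambda>i. X div P i)"
  have alg: "algA P x m k = (if \<exists>y. ok y then Some (\<lambda>i. if i = k then int (LEAST y. ok y)
               else (int (LEAST y. ok y) * Gki i - q i) div Gik i) else None)"
    unfolding algA_def Let_def ok_def ginv_def q_def Gki_def Gik_def mk_def by simp
  have Pk: "0 < P k" using Ppos km by simp
  have Pk_factor: "P k = Gki i * mk i" and Pi_factor: "P i = Gik i * mk i" for i
    unfolding Gki_def Gik_def mk_def by simp_all
  have q: "q i = n k * Gki i - n i * Gik i" if i: "i < m" "i \<noteq> k" for i
  proof -
    have "x i - x k = (P k * n k - P i * n i) + (e i - e k)"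
      using x i km unfolding n_def by (simp add: minus_div_mult_eq_mod[symmetric])
    also have "P k * n k - P i * n i = mk i * (n k * Gki i - n i * Gik i)"
      unfolding Pk_factor[of i] Pi_factor[of i] by (simp add: algebra_simps)
    finally have "q i = rnd (real_of_int (mk i * (n k * Gki i - n i * Gik i) + (e i - e k)) / real_of_int (mk i))"
      unfolding q_def by simp
    also have "\<dots> = n k * Gki i - n i * Gik i"
      using err i Pk by (intro rnd_div_near_multiple) (simp_all add: mk_def)
    finally show ?thesis .
  qed
  have q_cong: "[q i * ginv i = n k] (mod Gik i)" if "i < m" "i \<noteq> k" for i
  proof -
    have cop: "coprime (Gki i) (Gik i)" unfolding Gki_def Gik_def mk_def using Pk by (intro div_gcd_coprime) auto
    have inv: "[Gki i * ginv i = 1] (mod Gik i)"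
      unfolding ginv_def by (rule someI_ex) (rule cong_solve_coprime_int[OF cop])
    have "q i * ginv i = n k * (Gki i * ginv i) - n i * ginv i * Gik i"
      unfolding q[OF that] by (simp add: algebra_simps)
    also have "[\<dots> = n k * 1 - 0] (mod Gik i)"
      by (intro cong_diff cong_mult cong_refl inv) (simp add: cong_def)
    finally show ?thesis by simp
  qed
  have ok_iff: "ok y \<longleftrightarrow> Lcm (P ` {..<m}) dvd P k * (int y - n k)" for y
  proof -
    have "[int y = (q i * ginv i) mod Gik i] (mod Gik i) \<longleftrightarrow> Gik i dvd int y - n k"
      if "i < m" "i \<noteq> k" for i
      using q_cong[OF that] by (simp add: cong_def flip: cong_iff_dvd_diff)
    then have "ok y \<longleftrightarrow> (\<forall>i<m. i \<noteq> k \<longrightarrow> Gik i dvd int y - n k)"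
      unfolding ok_def by auto
    also have "\<dots> \<longleftrightarrow> (\<forall>i<m. P i dvd P k * (int y - n k))"
      using div_gcd_dvd_iff_dvd_mult[of "P k"] Pk unfolding Gik_def mk_def by auto
    finally show ?thesis by (auto simp add: Lcm_dvd_iff)
  qed
  have "P k * n k \<le> X" unfolding n_def using Pk X(1) by (simp add: pos_mod_sign minus_mod_eq_mult_div[symmetric])
  then have least: "int (LEAST y. ok y) = n k"
    using Least_dvd_mult_diff_eq[OF Pk _ le_less_trans[OF _ X(2)]] X(1) Pk
    unfolding ok_iff n_def by (simp add: pos_imp_zdiv_nonneg_iff)
  have "ok (nat (n k))"
    unfolding ok_iff n_def using X(1) Pk by (simp add: pos_imp_zdiv_nonneg_iff)
  moreover have "(n k * Gki i - q i) div Gik i = n i" if "i < m" "i \<noteq> k" for i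
    using q[OF that] Pi_factor[of i] Ppos that by force
  ultimately show ?thesis unfolding alg least n_def by auto
qed

lemma gt_increasing_prefix:
  fixes f :: "nat \<Rightarrow> 'a::order"
  assumes "c < f 0" and "\<forall>i. Suc i < n \<longrightarrow> f i < f (Suc i)" and "i < n"
  shows "c < f i"
  using assms(3)
proof (induction i)
  case (Suc i)
  then show ?case using assms(2) less_trans by fastforce
qed (use assms(1) in simp)

lemma Lcm_image_pos:
  fixes P :: "nat \<Rightarrow> int"
  assumes "\<forall>i<m. 0 < P i"
  shows "0 < Lcm (P ` {..<m})"
proof -
  have "Lcm (P ` {..<m}) \<noteq> 0" using assms by (auto simp: Lcm_0_iff)
  then show ?thesis by (simp add: order_less_le)
qed

lemma mingcd_le:
  assumes "q < m" "q \<noteq> i"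
  shows "mingcd P m i \<le> gcd (P i) (P q)"
  unfolding mingcd_def using assms by (intro Min_le) auto

definition stage1 :: "(nat \<Rightarrow> int) \<Rightarrow> (nat \<Rightarrow> int) \<Rightarrow> nat \<Rightarrow> nat \<Rightarrow> (nat \<Rightarrow> int) option" where
  "stage1 P x m r = (if 2 \<le> m then algA P x m r else Some (\<lambda>i. 0))"

lemma stage1_correct:
  fixes P x :: "nat \<Rightarrow> int" and N :: int and tau :: real
  assumes m: "1 \<le> m" and Ppos: "\<forall>i<m. 0 < P i"
    and r: "2 \<le> m \<longrightarrow> r < m \<and> mingcd P m r = maxmingcd P m"
    and x: "\<forall>i<m. real_of_int \<bar>x i - N mod P i\<bar> \<le> tau"
    and tau: "2 \<le> m \<Longrightarrow> tau < real_of_int (maxmingcd P m) / 4"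
  shows "\<exists>K. stage1 P x m r = Some K \<and> (\<forall>i<m. K i = N mod Lcm (P ` {..<m}) div P i)"
proof (cases "2 \<le> m")
  case True
  define D where "D = Lcm (P ` {..<m})"
  have "\<exists>f. algA P x m r = Some f \<and> (\<forall>i<m. f i = N mod D div P i)"
  proof (rule algA_correct[where e = "\<lambda>i. x i - N mod P i"])
    show "r < m" using r True by simp
    show "0 \<le> N mod D" "N mod D < Lcm (P ` {..<m})"
      using Lcm_image_pos[OF Ppos] unfolding D_def by simp_all
    show "\<forall>i<m. x i = N mod D mod P i + (x i - N mod P i)"
      unfolding D_def by (simp add: mod_mod_cancel)
    show "\<forall>i<m. i \<noteq> r \<longrightarrow> 2 * \<bar>x i - N mod P i - (x r - N mod P r)\<bar> < gcd (P r) (P i)"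
    proof (intro allI impI)
      fix i assume i: "i < m" "i \<noteq> r"
      have "maxmingcd P m \<le> gcd (P r) (P i)" using mingcd_le[OF i, of P] r True by simp
      then show "2 * \<bar>x i - N mod P i - (x r - N mod P r)\<bar> < gcd (P r) (P i)"
        using x i r True tau[OF True] by (intro twice_abs_diff_less[of _ tau _ tau]) auto
    qed
  qed fact
  then show ?thesis using True unfolding D_def stage1_def by simp
next
  case False
  then have "m = 1" using m by simp
  then have "Lcm (P ` {..<m}) = P 0" using Ppos by (simp add: lessThan_Suc)
  then show ?thesis using False \<open>m = 1\<close> Ppos unfolding stage1_def by simp
qed

lemma rnd_mean_error:
  fixes P K x :: "nat \<Rightarrow> int" and N D :: int and tau :: real
  assumes m: "0 < m" and dvd: "\<forall>i<m. P i dvd D" and K: "\<forall>i<m. K i = N mod D div P i"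
    and x: "\<forall>i<m. real_of_int \<bar>x i - N mod P i\<bar> \<le> tau"
  shows "real_of_int \<bar>rnd ((\<Sum>i<m. real_of_int (K i * P i + x i)) / real m) - N mod D\<bar> \<le> tau"
proof -
  define e where "e = (\<lambda>i. x i - N mod P i)"
  have "K i * P i + x i = N mod D + e i" if "i < m" for i
    using K dvd that div_mult_mod_eq[of "N mod D" "P i"] unfolding e_def by (simp add: mod_mod_cancel)
  then have "(\<Sum>i<m. real_of_int (K i * P i + x i)) / real m
      = real_of_int (N mod D) + (\<Sum>i<m. real_of_int (e i)) / real m"
    using m by (simp add: sum.distrib field_simps)
  then have "rnd ((\<Sum>i<m. real_of_int (K i * P i + x i)) / real m) - N mod D
      = rnd ((\<Sum>i<m. real_of_int (e i)) / real m)"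
    by (simp add: rnd_of_int_add)
  moreover have "\<forall>i<m. real_of_int \<bar>e i\<bar> \<le> tau" using x unfolding e_def by simp
  ultimately show ?thesis using abs_rnd_mean_le[OF m] by simp
qed

lemma twostage_correct:
  fixes s k :: nat and L ref :: "nat \<Rightarrow> nat" and M rt :: "nat \<Rightarrow> nat \<Rightarrow> int"
    and N :: int and tau :: "nat \<Rightarrow> real"
  assumes ks: "k < s" and L1: "\<forall>j<s. 1 \<le> L j" and M_pos: "\<forall>j<s. \<forall>i<L j. 0 < M j i"
    and N: "0 \<le> N" "N < Lcm (delta M L ` {..<s})"
    and stage1_ok: "\<forall>j<s. \<exists>K. stage1 (M j) (rt j) (L j) (ref j) = Some K
                  \<and> (\<forall>i<L j. K i = N mod delta M L j div M j i)"
    and rt_err: "\<forall>j<s. \<forall>i<L j. real_of_int \<bar>rt j i - N mod M j i\<bar> \<le> tau j"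
    and tau: "\<forall>j<s. j \<noteq> k \<longrightarrow> tau j + tau k < real_of_int (gcd (delta M L k) (delta M L j)) / 2"
  shows "\<exists>out. twostage s L M rt ref k = Some out \<and> (\<forall>j<s. \<forall>i<L j. out j i = N div M j i)"
proof -
  define d where "d = delta M L"
  define K where "K = (\<lambda>j. the (stage1 (M j) (rt j) (L j) (ref j)))"
  define Nh where "Nh = (\<lambda>j. rnd ((\<Sum>i<L j. real_of_int (K j i * M j i + rt j i)) / real (L j)))"
  have M_dvd: "\<forall>i<L j. M j i dvd d j" for j
    unfolding d_def delta_def by simp
  have K: "stage1 (M j) (rt j) (L j) (ref j) = Some (K j) \<and> (\<forall>i<L j. K j i = N mod d j div M j i)"
    if "j < s" for j
    using stage1_ok that unfolding K_def d_def by auto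
  have Nh_err: "real_of_int \<bar>Nh j - N mod d j\<bar> \<le> tau j" if "j < s" for j
    using rnd_mean_error[of "L j" "M j" "d j" "K j" N "rt j" "tau j"] L1 M_dvd K rt_err that
    unfolding Nh_def by auto
  have "\<exists>l. algA d Nh s k = Some l \<and> (\<forall>j<s. l j = N div d j)"
  proof (rule algA_correct[where e = "\<lambda>j. Nh j - N mod d j"])
    show "\<forall>j<s. 0 < d j" using M_pos Lcm_image_pos unfolding d_def delta_def by blast
    show "\<forall>j<s. j \<noteq> k \<longrightarrow> 2 * \<bar>Nh j - N mod d j - (Nh k - N mod d k)\<bar> < gcd (d k) (d j)"
      using Nh_err ks tau unfolding d_def by (blast intro: twice_abs_diff_less)
  qed (use ks N d_def in auto)
  then obtain l where l: "algA d Nh s k = Some l" "\<forall>j<s. l j = N div d j" by blast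
  have "twostage s L M rt ref k = Some (\<lambda>j i. l j * (d j div M j i) + K j i)"
    using K l(1) unfolding twostage_def Let_def stage1_def[symmetric] Nh_def K_def d_def by auto
  then show ?thesis
    using K l(2) M_dvd div_mult_div_add_mod_div by auto
qed

theorem corollary5:
  fixes s k :: nat and L ref :: "nat \<Rightarrow> nat" and M rt :: "nat \<Rightarrow> nat \<Rightarrow> int"
    and N :: int and tau :: "nat \<Rightarrow> real"
  assumes s2: "2 \<le> s"
    and L1: "\<forall>j<s. 1 \<le> L j"
    and Mpos: "\<forall>j<s. 0 < M j 0"
    and Mincr: "\<forall>j<s. \<forall>i. Suc i < L j \<longrightarrow> M j i < M j (Suc i)"
    and delta_distinct: "\<forall>j<s. \<forall>j'<s. j \<noteq> j' \<longrightarrow> delta M L j \<noteq> delta M L j'"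
    and N0: "0 \<le> N"
    and Nlt: "N < Lcm (delta M L ` {..<s})"
    and ks: "k < s"
    and kmax: "mingcd (delta M L) s k = maxmingcd (delta M L) s"
    and refok: "\<forall>j<s. 2 \<le> L j \<longrightarrow>
                   ref j < L j \<and> mingcd (M j) (L j) (ref j) = maxmingcd (M j) (L j)"
    and rt_range: "\<forall>j<s. \<forall>i<L j. 0 \<le> rt j i \<and> rt j i \<le> M j i - 1"
    and rt_err: "\<forall>j<s. \<forall>i<L j. real_of_int \<bar>rt j i - N mod M j i\<bar> \<le> tau j"
    and tau_k: "tau k < min (Gj L M k) (real_of_int (mingcd (delta M L) s k) / 4)"
    and tau_j: "\<forall>j<s. j \<noteq> k \<longrightarrow>
                 tau j < min (Gj L M j)
                   (real_of_int (gcd (delta M L j) (delta M L k)) / 2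
                    - min (Gj L M k) (real_of_int (mingcd (delta M L) s k) / 4))"
  shows "\<exists>out. twostage s L M rt ref k = Some out \<and>
           (\<forall>j<s. \<forall>i<L j. out j i = (N - N mod M j i) div M j i)"
proof -
  have M_pos: "\<forall>j<s. \<forall>i<L j. 0 < M j i"
    using gt_increasing_prefix[of 0] Mpos Mincr by blast
  have tau_G: "tau j < Gj L M j" if "j < s" for j
    using tau_k tau_j that by (cases "j = k") auto
  have "\<exists>K. stage1 (M j) (rt j) (L j) (ref j) = Some K
            \<and> (\<forall>i<L j. K i = N mod delta M L j div M j i)" if j: "j < s" for j
    unfolding delta_def using L1 M_pos refok rt_err tau_G[OF j] j
    by (intro stage1_correct[where tau = "tau j"]) (auto simp: Gj_def)
  moreover
  have "tau j + tau k < real_of_int (gcd (delta M L k) (delta M L j)) / 2" if "j < s" "j \<noteq> k" for j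
  proof -
    define G where "G = min (Gj L M k) (real_of_int (mingcd (delta M L) s k) / 4)"
    have "tau k < G" "tau j < real_of_int (gcd (delta M L k) (delta M L j)) / 2 - G"
      using tau_k tau_j that unfolding G_def by (auto simp: gcd.commute)
    then show ?thesis by linarith
  qed
  ultimately have "\<exists>out. twostage s L M rt ref k = Some out \<and> (\<forall>j<s. \<forall>i<L j. out j i = N div M j i)"
    using ks L1 M_pos N0 Nlt rt_err by (intro twostage_correct) auto
  moreover have "(N - N mod b) div b = N div b" for b :: int
    by (cases "b = 0") (simp_all add: minus_mod_eq_mult_div)
  ultimately show ?thesis by simp
qed

end
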